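(* Let $\mathcal{A}\subset\mathcal{B}\subset\mathcal{N}$ with $\mathcal{A}$ a $\gamma$-ensemble ($|\mathcal{A}|/N\ge\gamma$), and let $\Theta$ be a solution of the Kuramoto model with $D(\Theta_\mathcal{A}(t_0))<2\pi$. Then $$\left.\frac{d}{dt}\right|^+_{t=t_0}D(\Theta_\mathcal{A})\le D(\Omega_\mathcal{B})-2\kappa\sin\frac{D(\Theta_\mathcal{A}(t_0))}{2}\left(\gamma\cos\frac{D(\Theta_\mathcal{A}(t_0))}{2}-(1-\gamma)\right),$$ where $\frac{d}{dt}\big|^+$ is the upper Dini derivative.
   Context: Kuramoto model: for $N\ge2$, $\Omega=(\nu_1,\dots,\nu_N)\in\mathbb{R}^N$, $\kappa\ge0$, $\Theta(t)\in\mathbb{R}^N$ solves $\dot\theta_i=\nu_i+\frac{\kappa}{N}\sum_j\sin(\theta_j-\theta_i)$. $\mathcal{N}=\{1,\dots,N\}$; for $\mathcal{A}\subset\mathcal{N}$, $D(\Theta_\mathcal{A})=\max_{i,j\in\mathcal{A}}|\theta_i-\theta_j|$, $D(\Omega_\mathcal{A})=\max_{i,j\in\mathcal{A}}|\nu_i-\nu_j|$; $\gamma\in(1/2,1]$. *)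

theory Defs
  imports "HOL-Analysis.Analysis" "HOL-Library.Extended_Real"
begin

definition diam :: "nat set \<Rightarrow> (nat \<Rightarrow> real) \<Rightarrow> real" where
  "diam A x = Max {\<bar>x i - x j\<bar> | i j. i \<in> A \<and> j \<in> A}"

definition kuramoto_rhs :: "nat \<Rightarrow> (nat \<Rightarrow> real) \<Rightarrow> real \<Rightarrow> (nat \<Rightarrow> real) \<Rightarrow> nat \<Rightarrow> real" where
  "kuramoto_rhs N \<nu> \<kappa> \<theta> i = \<nu> i + \<kappa> / real N * (\<Sum>j\<in>{1..N}. sin (\<theta> j - \<theta> i))"

definition upper_dini :: "(real \<Rightarrow> real) \<Rightarrow> real \<Rightarrow> ereal" where
  "upper_dini f t = Limsup (at_right 0) (\<lambda>h. ereal ((f (t + h) - f t) / h))"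

end

theory Submission imports Defs begin

text \<open>The diameter is the maximum over pairs of the differences \<open>\<theta>\<^sub>i - \<theta>\<^sub>j\<close>, so its upper Dini
  derivative is at most the largest derivative of an extremal pair \<open>(M, m)\<close>. For such a pair all
  phases of \<open>A\<close> lie in \<open>[\<theta>\<^sub>m, \<theta>\<^sub>M]\<close>, an arc of length \<open>D < 2\<pi>\<close>; writing
  \<open>sin (\<theta>\<^sub>j - \<theta>\<^sub>M) - sin (\<theta>\<^sub>j - \<theta>\<^sub>m) = -2 sin (D/2) cos (\<theta>\<^sub>j - c)\<close> with \<open>c\<close> the midpoint,
  each oscillator of \<open>A\<close> contributes at most \<open>-2 sin (D/2) cos (D/2)\<close> and every other one at most
  \<open>2 sin (D/2)\<close> to the coupling term of \<open>\<dot>\<theta>\<^sub>M - \<dot>\<theta>\<^sub>m\<close>.\<close>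

lemma at_within_Ico_eq_at_right:
  fixes t0 T :: real
  assumes "T > 0"
  shows "at t0 within {t0..<t0+T} = at_right t0"
  by (rule at_within_nhd[of _ "{t0-T<..<t0+T}"]) (use assms in auto)

lemma eventually_below_line_at_right:
  fixes g :: "real \<Rightarrow> real"
  assumes deriv: "(g has_real_derivative d) (at_right t0)"
    and "g t0 \<le> G" and active: "g t0 = G \<Longrightarrow> d < c"
  shows "eventually (\<lambda>y. g y \<le> G + (y - t0) * c) (at_right t0)"
proof (cases "g t0 = G")
  case True
  have "eventually (\<lambda>y. (g y - g t0) / (y - t0) < c) (at_right t0)"
    using order_tendstoD(2)[OF deriv[unfolded has_field_derivative_iff] active[OF True]] .
  moreover have "eventually (\<lambda>y. t0 < y) (at_right t0)"
    by (rule eventually_at_right_less)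
  ultimately show ?thesis
    by eventually_elim (use True in \<open>auto simp: divide_less_eq algebra_simps\<close>)
next
  case False
  have "((\<lambda>y. g y - (y - t0) * c) \<longlongrightarrow> g t0 - (t0 - t0) * c) (at_right t0)"
    using DERIV_continuous[OF deriv] by (intro tendsto_intros) (simp add: continuous_within)
  then have "eventually (\<lambda>y. g y - (y - t0) * c < G) (at_right t0)"
    by (rule order_tendstoD(2)) (use \<open>g t0 \<le> G\<close> False in simp)
  then show ?thesis
    by eventually_elim simp
qed

lemma upper_dini_Max_le:
  fixes f :: "'p \<Rightarrow> real \<Rightarrow> real"
  assumes fin: "finite P" and ne: "P \<noteq> {}"
    and deriv: "\<And>p. p \<in> P \<Longrightarrow> (f p has_real_derivative d p) (at_right t0)"
    and active: "\<And>p. p \<in> P \<Longrightarrow> f p t0 = Max ((\<lambda>q. f q t0) ` P) \<Longrightarrow> d p \<le> c"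
  shows "upper_dini (\<lambda>t. Max ((\<lambda>p. f p t) ` P)) t0 \<le> ereal c"
  unfolding upper_dini_def
proof (rule ereal_le_epsilon2)
  fix e :: real
  assume "0 < e"
  define G where "G = Max ((\<lambda>q. f q t0) ` P)"
  have "eventually (\<lambda>y. f p y \<le> G + (y - t0) * (c + e)) (at_right t0)" if "p \<in> P" for p
    using that fin \<open>0 < e\<close> active[OF that]
    by (intro eventually_below_line_at_right[OF deriv]) (auto simp: G_def)
  then have "eventually (\<lambda>y. \<forall>p\<in>P. f p y \<le> G + (y - t0) * (c + e)) (at_right t0)"
    using fin by (simp add: eventually_ball_finite)
  moreover have "eventually (\<lambda>y. t0 < y) (at_right t0)"
    by (rule eventually_at_right_less)
  ultimately have "eventually (\<lambda>y. (Max ((\<lambda>q. f q y) ` P) - G) / (y - t0) \<le> c + e) (at_right t0)"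
  proof eventually_elim
    case (elim y)
    then have "Max ((\<lambda>q. f q y) ` P) \<le> G + (y - t0) * (c + e)"
      using fin ne by (subst Max_le_iff) auto
    with \<open>t0 < y\<close> show ?case
      by (simp add: divide_le_eq algebra_simps)
  qed
  then have "eventually (\<lambda>h. (Max ((\<lambda>q. f q (t0 + h)) ` P) - G) / h \<le> c + e) (at_right 0)"
    by (subst (asm) eventually_at_right_to_0) (simp add: add.commute)
  then show "Limsup (at_right 0) (\<lambda>h. ereal ((Max ((\<lambda>p. f p (t0 + h)) ` P) - G) / h))
      \<le> ereal c + ereal e"
    by (auto intro: Limsup_bounded elim: eventually_mono)
qed

lemma diam_eq_Max_abs: "diam A x = Max ((\<lambda>(i, j). \<bar>x i - x j\<bar>) ` (A \<times> A))"
proof -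
  have "{\<bar>x i - x j\<bar> | i j. i \<in> A \<and> j \<in> A} = (\<lambda>(i, j). \<bar>x i - x j\<bar>) ` (A \<times> A)"
    by auto
  then show ?thesis
    by (simp add: diam_def)
qed

lemma abs_diff_le_diam:
  assumes "finite A" "i \<in> A" "j \<in> A"
  shows "\<bar>x i - x j\<bar> \<le> diam A x"
  unfolding diam_eq_Max_abs using assms by (intro Max_ge) auto

lemma diam_eq_Max_diff:
  assumes fin: "finite A" and ne: "A \<noteq> {}"
  shows "diam A x = Max ((\<lambda>(i, j). x i - x j) ` (A \<times> A))"
proof (rule antisym)
  have "x i - x j \<le> Max ((\<lambda>(i, j). x i - x j) ` (A \<times> A))" if "i \<in> A" "j \<in> A" for i j
    using that fin by (intro Max_ge) auto
  then have "\<bar>x i - x j\<bar> \<le> Max ((\<lambda>(i, j). x i - x j) ` (A \<times> A))" if "i \<in> A" "j \<in> A" for i j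
    using that by (cases "x j \<le> x i") (auto simp: abs_if)
  then show "diam A x \<le> Max ((\<lambda>(i, j). x i - x j) ` (A \<times> A))"
    unfolding diam_eq_Max_abs using fin ne by (subst Max_le_iff) auto
  show "Max ((\<lambda>(i, j). x i - x j) ` (A \<times> A)) \<le> diam A x"
    using fin ne abs_diff_le_diam[OF fin, of _ _ x] by (subst Max_le_iff) force+
qed

lemma diam_extremal_pair_bounds:
  assumes "finite A" "M \<in> A" "m \<in> A" "x M - x m = diam A x" "j \<in> A"
  shows "x m \<le> x j \<and> x j \<le> x M"
  using abs_diff_le_diam[of A M j x] abs_diff_le_diam[of A j m x] assms by auto

lemma sin_diff_sin_midpoint:
  fixes y a b :: real
  shows "sin (y - a) - sin (y - b) = - 2 * sin ((a - b) / 2) * cos (y - (a + b) / 2)"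
proof -
  have "sin (y - a) - sin (y - b) = 2 * sin ((y - a - (y - b)) / 2) * cos ((y - a + (y - b)) / 2)"
    by (rule sin_diff_sin)
  also have "(y - a - (y - b)) / 2 = - ((a - b) / 2)"
    by (simp add: field_simps)
  also have "(y - a + (y - b)) / 2 = y - (a + b) / 2"
    by (simp add: field_simps)
  finally show ?thesis
    by simp
qed

lemma sum_sin_diff_le:
  fixes x :: "'i \<Rightarrow> real" and lo hi :: real
  assumes "finite I" "A \<subseteq> I"
    and between: "\<And>j. j \<in> A \<Longrightarrow> lo \<le> x j \<and> x j \<le> hi"
    and "lo \<le> hi" "hi - lo \<le> 2 * pi"
  shows "(\<Sum>j\<in>I. sin (x j - hi) - sin (x j - lo))
    \<le> - 2 * sin ((hi - lo) / 2) * (card A * cos ((hi - lo) / 2) - card (I - A))"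
proof -
  define s where "s = sin ((hi - lo) / 2)"
  define C where "C = cos ((hi - lo) / 2)"
  define gap where "gap j = sin (x j - hi) - sin (x j - lo)" for j
  have s: "0 \<le> s"
    unfolding s_def using assms(4,5) by (intro sin_ge_zero) auto
  have gap_eq: "gap j = - 2 * s * cos (x j - (hi + lo) / 2)" for j
    unfolding gap_def s_def by (rule sin_diff_sin_midpoint)
  have "gap j \<le> - 2 * s * C" if "j \<in> A" for j
  proof -
    have "\<bar>x j - (hi + lo) / 2\<bar> \<le> (hi - lo) / 2"
      using between[OF that] unfolding abs_le_iff by (auto simp: field_simps)
    then have "C \<le> cos (x j - (hi + lo) / 2)"
      unfolding C_def using assms(4,5) by (subst cos_abs_real[symmetric], subst cos_mono_le_eq) auto
    then show ?thesis
      unfolding gap_eq using s by (simp add: mult_left_mono)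
  qed
  then have "(\<Sum>j\<in>A. gap j) \<le> card A * (- 2 * s * C)"
    by (rule sum_bounded_above)
  moreover have "gap j \<le> 2 * s" for j
    using mult_left_mono[OF cos_ge_minus_one[of "x j - (hi + lo) / 2"] s] unfolding gap_eq by simp
  then have "(\<Sum>j\<in>I - A. gap j) \<le> card (I - A) * (2 * s)"
    by (rule sum_bounded_above)
  moreover have "(\<Sum>j\<in>I. gap j) = (\<Sum>j\<in>A. gap j) + (\<Sum>j\<in>I - A. gap j)"
    using sum.subset_diff[OF assms(2,1)] by (simp add: add.commute)
  ultimately have "(\<Sum>j\<in>I. gap j) \<le> - 2 * s * (card A * C - card (I - A))"
    by (simp add: algebra_simps)
  then show ?thesis
    unfolding gap_def s_def C_def .
qed

lemma kuramoto_rhs_diff_le: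
  fixes x \<nu> :: "nat \<Rightarrow> real"
  assumes "N > 0" "\<kappa> \<ge> 0" "A \<subseteq> {1..N}" "\<gamma> \<le> real (card A) / real N"
    and between: "\<And>j. j \<in> A \<Longrightarrow> x m \<le> x j \<and> x j \<le> x M"
    and "x m \<le> x M" "x M - x m \<le> 2 * pi"
  shows "kuramoto_rhs N \<nu> \<kappa> x M - kuramoto_rhs N \<nu> \<kappa> x m
    \<le> \<nu> M - \<nu> m - 2 * \<kappa> * sin ((x M - x m) / 2) * (\<gamma> * cos ((x M - x m) / 2) - (1 - \<gamma>))"
proof -
  define s where "s = sin ((x M - x m) / 2)"
  define C where "C = cos ((x M - x m) / 2)"
  define a where "a = real (card A) / real N"
  have s: "0 \<le> s"
    unfolding s_def using assms(6,7) by (intro sin_ge_zero) auto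
  have card_A: "real (card A) = a * real N"
    using assms(1) by (simp add: a_def)
  have "finite A"
    using assms(3) finite_subset by blast
  then have card_rest: "real (card ({1..N} - A)) = (1 - a) * real N"
    using assms(3) card_A card_mono[OF _ assms(3)]
    by (simp add: card_Diff_subset of_nat_diff algebra_simps)
  have "kuramoto_rhs N \<nu> \<kappa> x M - kuramoto_rhs N \<nu> \<kappa> x m
      = \<nu> M - \<nu> m + \<kappa> / real N * (\<Sum>j\<in>{1..N}. sin (x j - x M) - sin (x j - x m))"
    unfolding kuramoto_rhs_def by (simp add: sum_subtractf algebra_simps)
  also have "\<dots> \<le> \<nu> M - \<nu> m + \<kappa> / real N * (- 2 * s * (card A * C - card ({1..N} - A)))"
    unfolding s_def C_def using assms
    by (intro add_left_mono mult_left_mono sum_sin_diff_le) auto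
  also have "\<dots> = \<nu> M - \<nu> m - 2 * \<kappa> * s * (a * C - (1 - a))"
    unfolding card_A card_rest using assms(1) by (simp add: field_simps)
  also have "\<dots> \<le> \<nu> M - \<nu> m - 2 * \<kappa> * s * (\<gamma> * C - (1 - \<gamma>))"
  proof -
    \<comment> \<open>the bound is monotone in the fraction \<open>a = |A|/N\<close> because \<open>C + 1 \<ge> 0\<close>\<close>
    have "-1 \<le> C"
      unfolding C_def by simp
    then have "0 \<le> \<kappa> * s * ((a - \<gamma>) * (C + 1))"
      using assms(2,4) s by (intro mult_nonneg_nonneg) (auto simp: a_def)
    then show ?thesis
      by (simp add: algebra_simps)
  qed
  finally show ?thesis
    unfolding s_def C_def .
qed

lemma kuramoto_rhs_diff_le_diam:
  fixes x \<nu> :: "nat \<Rightarrow> real"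
  assumes "N > 0" "\<kappa> \<ge> 0" "A \<subseteq> B" "B \<subseteq> {1..N}" "\<gamma> \<le> real (card A) / real N"
    and "M \<in> A" "m \<in> A" "x M - x m = diam A x" "diam A x \<le> 2 * pi"
  shows "kuramoto_rhs N \<nu> \<kappa> x M - kuramoto_rhs N \<nu> \<kappa> x m
    \<le> diam B \<nu> - 2 * \<kappa> * sin (diam A x / 2) * (\<gamma> * cos (diam A x / 2) - (1 - \<gamma>))"
proof -
  have fin: "finite B" "finite A"
    using finite_subset[OF assms(4)] finite_subset[OF assms(3)] by auto
  have "\<bar>\<nu> M - \<nu> m\<bar> \<le> diam B \<nu>"
    using assms(3,6,7) fin(1) by (intro abs_diff_le_diam) auto
  then have "\<nu> M - \<nu> m \<le> diam B \<nu>"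
    by linarith
  moreover have "kuramoto_rhs N \<nu> \<kappa> x M - kuramoto_rhs N \<nu> \<kappa> x m
      \<le> \<nu> M - \<nu> m - 2 * \<kappa> * sin (diam A x / 2) * (\<gamma> * cos (diam A x / 2) - (1 - \<gamma>))"
    using kuramoto_rhs_diff_le[of N \<kappa> A \<gamma> x m M \<nu>] diam_extremal_pair_bounds[OF fin(2)] assms
    by auto
  ultimately show ?thesis
    by linarith
qed

theorem lemma4p1:
  fixes N :: nat and \<nu> :: "nat \<Rightarrow> real" and \<kappa> \<gamma> t0 T :: real
    and \<Theta> :: "real \<Rightarrow> nat \<Rightarrow> real" and A B :: "nat set"
  assumes "N \<ge> 2" and "\<kappa> \<ge> 0" and "1/2 < \<gamma>" and "\<gamma> \<le> 1"
    and "A \<subseteq> B" and "B \<subseteq> {1..N}"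
    and "real (card A) / real N \<ge> \<gamma>"
    and "T > 0"
    and sol: "\<And>i t. i \<in> {1..N} \<Longrightarrow> t \<in> {t0..<t0+T} \<Longrightarrow>
           ((\<lambda>s. \<Theta> s i) has_real_derivative kuramoto_rhs N \<nu> \<kappa> (\<Theta> t) i) (at t within {t0..<t0+T})"
    and "diam A (\<Theta> t0) < 2 * pi"
  shows "upper_dini (\<lambda>t. diam A (\<Theta> t)) t0
    \<le> ereal (diam B \<nu> - 2 * \<kappa> * sin (diam A (\<Theta> t0) / 2)
              * (\<gamma> * cos (diam A (\<Theta> t0) / 2) - (1 - \<gamma>)))"
proof -
  have A: "A \<subseteq> {1..N}" "finite A" "A \<noteq> {}"
    using assms(3,5,6,7) finite_subset[of A "{1..N}"] by auto
  define f where "f p t = \<Theta> t (fst p) - \<Theta> t (snd p)" for p :: "nat \<times> nat" and t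
  define d where "d p = kuramoto_rhs N \<nu> \<kappa> (\<Theta> t0) (fst p) - kuramoto_rhs N \<nu> \<kappa> (\<Theta> t0) (snd p)"
    for p :: "nat \<times> nat"
  define bound where "bound = diam B \<nu> - 2 * \<kappa> * sin (diam A (\<Theta> t0) / 2)
    * (\<gamma> * cos (diam A (\<Theta> t0) / 2) - (1 - \<gamma>))"
  have diam_t: "diam A (\<Theta> t) = Max ((\<lambda>p. f p t) ` (A \<times> A))" for t
    unfolding diam_eq_Max_diff[OF A(2,3)] f_def by (simp add: case_prod_beta)
  have deriv: "(f p has_real_derivative d p) (at_right t0)" if "p \<in> A \<times> A" for p
  proof -
    have "t0 \<in> {t0..<t0+T}" "fst p \<in> {1..N}" "snd p \<in> {1..N}"
      using assms(8) that A(1) by auto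
    then have "(f p has_real_derivative d p) (at t0 within {t0..<t0+T})"
      unfolding f_def d_def by (intro DERIV_diff sol)
    then show ?thesis
      unfolding at_within_Ico_eq_at_right[OF assms(8)] .
  qed
  have active: "d p \<le> bound"
    if "p \<in> A \<times> A" "f p t0 = Max ((\<lambda>q. f q t0) ` (A \<times> A))" for p
    using that diam_t[of t0] assms(1,2,5,6,7,10) unfolding d_def bound_def f_def
    by (intro kuramoto_rhs_diff_le_diam) auto
  have "upper_dini (\<lambda>t. Max ((\<lambda>p. f p t) ` (A \<times> A))) t0 \<le> ereal bound"
    by (intro upper_dini_Max_le[where d = d] deriv active) (use A in auto)
  then show ?thesis
    unfolding bound_def by (simp only: diam_t[symmetric])
qed

end
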